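(* Let $\mathbf{C}=\mathbf{C}_1\,\dot\cup\,\mathbf{C}_2$ and $\mathbf{B}\in\dot{\mathbb{P}}(\mathbb{L}(\mathbf{C}_1))$ with $|\mathbf{B}|=|\mathbf{C}_1|$. Suppose $\mathbf{W}$ suffices to adjust for confounding of $\mathbf{C}$ on $D$. If for some values $\mathbf{c}_2$ of $\mathbf{C}_2$ and $\mathbf{w}$ of $\mathbf{W}$ (with all conditioning events below of positive probability) $$E[D\mid\mathbf{B}=\mathbf{1},\mathbf{C}_2=\mathbf{c}_2,\mathbf{W}=\mathbf{w}]-\sum_{L\in\mathbf{B}}E[D\mid\mathbf{B}\setminus\{L\}=\mathbf{1},L=0,\mathbf{C}_2=\mathbf{c}_2,\mathbf{W}=\mathbf{w}]>0,$$ then $\mathbf{B}$ is irreducible for $\mathcal{D}(\mathbf{C},\Omega)$.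
   Context: $\Omega$ is a population with a probability distribution; events are binary random variables; $\overline{X}=1-X$; $\mathbb{L}(\mathbf{C})=\mathbf{C}\cup\{\overline{X}:X\in\mathbf{C}\}$; $\dot{\mathbb{P}}(\mathbb{L}(\mathbf{C}))$ is the set of subsets of $\mathbb{L}(\mathbf{C})$ not containing both $X$ and $\overline{X}$; $(L)_{\mathbf{c}}$ is the value of literal $L$ under assignment $\mathbf{c}$; $\bigwedge(\mathbf{B})=\min_{L\in\mathbf{B}}L$. Potential outcomes $\mathcal{D}(\mathbf{C},\Omega)$: values $D_{\mathbf{c}}(\omega)\in\{0,1\}$ for all $\omega$ and assignments $\mathbf{c}$; the observed variables $\mathbf{C}(\omega)$, $D(\omega)$ satisfy consistency $D(\omega)=D_{\mathbf{C}(\omega)}(\omega)$. Since $|\mathbf{B}|=|\mathbf{C}_1|$, setting the literals of $\mathbf{B}$ to values determines an assignment to $\mathbf{C}_1$; conditioning events such as $\{\mathbf{B}\setminus\{L\}=\mathbf{1},L=0\}$ mean the literals of $\mathbf{B}\setminus\{L\}$ equal 1 and $L$ equals 0. A set of covariates $\mathbf{W}$ suffices to adjust for confounding of $\mathbf{C}$ on $D$ if $D_{\mathbf{c}}$ is independent of $\mathbf{C}$ conditional on $\mathbf{W}=\mathbf{w}$ for all $\mathbf{c},\mathbf{w}$. A sufficient cause representation $(\mathbf{A},\mathfrak{B})$ for $\mathcal{D}(\mathbf{C},\Omega)$ is a tuple $\mathbf{A}=\langle A_1,\dots,A_p\rangle$ of binary random variables on $\Omega$ unaffected by interventions on $\mathbf{C}$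 and $\mathfrak{B}=\langle\mathbf{B}_1,\dots,\mathbf{B}_p\rangle$, $\mathbf{B}_i\in\dot{\mathbb{P}}(\mathbb{L}(\mathbf{C}))$, with: $D_{\mathbf{c}}(\omega)=1$ iff some $j$ has $A_j(\omega)=1$ and $(\bigwedge(\mathbf{B}_j))_{\mathbf{c}}=1$. $\mathbf{B}$ is irreducible for $\mathcal{D}(\mathbf{C},\Omega)$ if in every such representation some $\mathbf{B}_i\supseteq\mathbf{B}$. *)

theory Defs
  imports "HOL-Probability.Probability"
begin

text \<open>Binary variables are named by elements of type 'v; an assignment to a set of
variables C is a total function 'v => bool which is False outside C.\<close>

definition asg :: "'v set \<Rightarrow> ('v \<Rightarrow> bool) set" where
  "asg C = {c. \<forall>v. v \<notin> C \<longrightarrow> c v = False}"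

datatype 'v lit = Pos 'v | Neg 'v

definition lits :: "'v set \<Rightarrow> 'v lit set" where
  "lits C = Pos ` C \<union> Neg ` C"

definition dotPow :: "'v set \<Rightarrow> 'v lit set set" where
  "dotPow C = {B. B \<subseteq> lits C \<and> (\<forall>v. \<not> (Pos v \<in> B \<and> Neg v \<in> B))}"

fun litval :: "'v lit \<Rightarrow> ('v \<Rightarrow> bool) \<Rightarrow> bool" where
  "litval (Pos v) c = c v"
| "litval (Neg v) c = (\<not> c v)"

definition conj :: "'v lit set \<Rightarrow> ('v \<Rightarrow> bool) \<Rightarrow> bool" where
  "conj B c = (\<forall>L\<in>B. litval L c)"

text \<open>Sufficient cause representation (A, B) with p components for the potential
outcomes Dpo c (c an assignment to C).  The A_j are binary random variables on Omega
not depending on the intervention c.\<close>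
definition suff_cause_rep ::
  "'a measure \<Rightarrow> 'v set \<Rightarrow> (('v \<Rightarrow> bool) \<Rightarrow> 'a \<Rightarrow> bool)
   \<Rightarrow> nat \<Rightarrow> (nat \<Rightarrow> 'a \<Rightarrow> bool) \<Rightarrow> (nat \<Rightarrow> 'v lit set) \<Rightarrow> bool" where
  "suff_cause_rep M C Dpo p A Bs \<longleftrightarrow>
     (\<forall>j<p. A j \<in> measurable M (count_space UNIV)) \<and>
     (\<forall>j<p. Bs j \<in> dotPow C) \<and>
     (\<forall>\<omega>\<in>space M. \<forall>c\<in>asg C. Dpo c \<omega> \<longleftrightarrow> (\<exists>j<p. A j \<omega> \<and> conj (Bs j) c))"

definition irreducible ::
  "'a measure \<Rightarrow> 'v set \<Rightarrow> (('v \<Rightarrow> bool) \<Rightarrow> 'a \<Rightarrow> bool) \<Rightarrow> 'v lit set \<Rightarrow> bool" where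
  "irreducible M C Dpo B \<longleftrightarrow>
     (\<forall>p A Bs. suff_cause_rep M C Dpo p A Bs \<longrightarrow> (\<exists>i<p. B \<subseteq> Bs i))"

text \<open>W suffices to adjust for confounding of C on D: D_c is independent of the
observed C conditional on W = w, for all c and w (written multiplicatively).\<close>
definition no_confounding ::
  "'a measure \<Rightarrow> 'v set \<Rightarrow> ('a \<Rightarrow> 'v \<Rightarrow> bool) \<Rightarrow> (('v \<Rightarrow> bool) \<Rightarrow> 'a \<Rightarrow> bool)
   \<Rightarrow> ('a \<Rightarrow> 'w) \<Rightarrow> bool" where
  "no_confounding M C Cobs Dpo W \<longleftrightarrow>
     (\<forall>c\<in>asg C. \<forall>c'\<in>asg C. \<forall>w.
        measure M {\<omega>\<in>space M. Dpo c \<omega> \<and> Cobs \<omega> = c' \<and> W \<omega> = w}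
          * measure M {\<omega>\<in>space M. W \<omega> = w}
        = measure M {\<omega>\<in>space M. Dpo c \<omega> \<and> W \<omega> = w}
          * measure M {\<omega>\<in>space M. Cobs \<omega> = c' \<and> W \<omega> = w})"

definition condE :: "'a measure \<Rightarrow> ('a \<Rightarrow> bool) \<Rightarrow> ('a \<Rightarrow> bool) \<Rightarrow> real" where
  "condE M D E = measure M {\<omega>\<in>space M. D \<omega> \<and> E \<omega>} / measure M {\<omega>\<in>space M. E \<omega>}"

end

theory Submission
  imports Defs
begin

text \<open>Let \<open>c\<close> be the unique assignment making every literal of \<open>B\<close> true and agreeing with
  \<open>c\<^sub>2\<close> on \<open>C\<^sub>2\<close>, and \<open>c\<^sub>L\<close> the assignment obtained by flipping the variable of \<open>L \<in> B\<close>.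
  Because \<open>W\<close> adjusts for confounding, each conditional expectation in the hypothesis equals
  \<open>P(D\<^sub>x = 1, W = w) / P(W = w)\<close> for the corresponding \<open>x\<close>, so the hypothesis says
  \<open>P(D\<^sub>c = 1, W = w) > \<Sum>\<^sub>L P(D\<^sub>c\<^sub>L = 1, W = w)\<close>.  In a representation in which no \<open>B\<^sub>j\<close> contains
  \<open>B\<close>, a cause \<open>B\<^sub>j\<close> active at \<open>c\<close> misses some \<open>L \<in> B\<close>; as every literal of \<open>B\<^sub>j\<close> is true at \<open>c\<close>,
  none of them mentions the variable of \<open>L\<close>, so \<open>B\<^sub>j\<close> is also active at \<open>c\<^sub>L\<close>.  Hence
  \<open>D\<^sub>c \<le> max\<^sub>L D\<^sub>c\<^sub>L\<close> pointwise, contradicting the inequality by subadditivity.\<close>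

fun lit_var :: "'v lit \<Rightarrow> 'v" where
  "lit_var (Pos v) = v"
| "lit_var (Neg v) = v"

definition flip_lit :: "'v lit \<Rightarrow> ('v \<Rightarrow> bool) \<Rightarrow> 'v \<Rightarrow> bool" where
  "flip_lit L c = c(lit_var L := \<not> c (lit_var L))"

lemma litval_flip_lit_self: "litval L (flip_lit L c) \<longleftrightarrow> \<not> litval L c"
  by (cases L) (auto simp: flip_lit_def)

lemma litval_flip_lit_other: "lit_var L' \<noteq> lit_var L \<Longrightarrow> litval L' (flip_lit L c) = litval L' c"
  by (cases L') (auto simp: flip_lit_def)

lemma flip_lit_flip_lit [simp]: "flip_lit L (flip_lit L c) = c"
  by (auto simp: flip_lit_def)

lemma flip_lit_eq_iff: "flip_lit L x = y \<longleftrightarrow> x = flip_lit L y"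
  by auto

lemma flip_lit_asg: "lit_var L \<in> C \<Longrightarrow> c \<in> asg C \<Longrightarrow> flip_lit L c \<in> asg C"
  by (auto simp: flip_lit_def asg_def)

lemma flip_lit_apply_other: "v \<noteq> lit_var L \<Longrightarrow> flip_lit L c v = c v"
  by (simp add: flip_lit_def)

lemma lit_eq_if_true_same_var:
  "litval L c \<Longrightarrow> litval L' c \<Longrightarrow> lit_var L = lit_var L' \<Longrightarrow> L = L'"
  by (cases L; cases L') auto

lemma conj_flip_lit:
  assumes "conj B' c" "litval L c" "L \<notin> B'"
  shows "conj B' (flip_lit L c)"
  unfolding conj_def
proof
  fix L' assume "L' \<in> B'"
  with assms have "litval L' c" "L' \<noteq> L" by (auto simp: conj_def)
  with \<open>litval L c\<close> have "lit_var L' \<noteq> lit_var L" using lit_eq_if_true_same_var by blast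
  then show "litval L' (flip_lit L c)" using \<open>litval L' c\<close> by (simp add: litval_flip_lit_other)
qed

lemma conj_flip_lit_iff:
  assumes "inj_on lit_var B" "L \<in> B"
  shows "conj B (flip_lit L x) \<longleftrightarrow> conj (B - {L}) x \<and> \<not> litval L x"
proof -
  have "lit_var L' \<noteq> lit_var L" if "L' \<in> B - {L}" for L'
    using assms that by (auto dest: inj_onD)
  then have "conj (B - {L}) (flip_lit L x) \<longleftrightarrow> conj (B - {L}) x"
    by (simp add: conj_def litval_flip_lit_other)
  moreover have "B = insert L (B - {L})" using \<open>L \<in> B\<close> by blast
  ultimately show ?thesis
    by (metis conj_def insert_iff litval_flip_lit_self)
qed

lemma lit_var_mem_dotPow: "B \<in> dotPow C \<Longrightarrow> L \<in> B \<Longrightarrow> lit_var L \<in> C"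
  by (cases L) (auto simp: dotPow_def lits_def)

lemma inj_on_lit_var_dotPow: "B \<in> dotPow C \<Longrightarrow> inj_on lit_var B"
  by (rule inj_onI, simp add: dotPow_def) (metis lit.exhaust lit_var.simps)

lemma lit_var_image_dotPow:
  assumes "finite C" "B \<in> dotPow C" "card B = card C"
  shows "lit_var ` B = C"
proof (rule card_subset_eq)
  show "lit_var ` B \<subseteq> C" using assms(2) lit_var_mem_dotPow by blast
  show "card (lit_var ` B) = card C"
    using card_image[OF inj_on_lit_var_dotPow[OF assms(2)]] assms(3) by simp
qed fact

definition lits_asg :: "'v set \<Rightarrow> 'v lit set \<Rightarrow> ('v \<Rightarrow> bool) \<Rightarrow> 'v \<Rightarrow> bool" where
  "lits_asg C1 B c2 v = (if v \<in> C1 then Pos v \<in> B else c2 v)"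

lemma lits_asg_asg: "c2 \<in> asg C2 \<Longrightarrow> lits_asg C1 B c2 \<in> asg (C1 \<union> C2)"
  by (auto simp: asg_def lits_asg_def)

lemma conj_lits_asg: "B \<in> dotPow C1 \<Longrightarrow> conj B (lits_asg C1 B c2)"
  unfolding conj_def
proof
  fix L assume "B \<in> dotPow C1" "L \<in> B"
  then show "litval L (lits_asg C1 B c2)"
    using lit_var_mem_dotPow[of B C1 L] by (cases L) (auto simp: dotPow_def lits_asg_def)
qed

lemma conj_agree_iff_lits_asg:
  assumes full: "finite C1" "B \<in> dotPow C1" "card B = card C1"
    and "C1 \<inter> C2 = {}" "x \<in> asg (C1 \<union> C2)" "c2 \<in> asg C2"
  shows "conj B x \<and> (\<forall>v\<in>C2. x v = c2 v) \<longleftrightarrow> x = lits_asg C1 B c2"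
proof
  assume agree: "conj B x \<and> (\<forall>v\<in>C2. x v = c2 v)"
  show "x = lits_asg C1 B c2"
  proof
    fix v
    show "x v = lits_asg C1 B c2 v"
    proof (cases "v \<in> C1")
      case True
      with lit_var_image_dotPow[OF full] obtain L where "L \<in> B" "lit_var L = v" by blast
      then show ?thesis
        using agree \<open>B \<in> dotPow C1\<close> True
        by (cases L) (auto simp: conj_def dotPow_def lits_asg_def)
    next
      case False
      then show ?thesis using agree assms(5,6) by (auto simp: asg_def lits_asg_def)
    qed
  qed
next
  assume "x = lits_asg C1 B c2"
  then show "conj B x \<and> (\<forall>v\<in>C2. x v = c2 v)"
    using conj_lits_asg[OF \<open>B \<in> dotPow C1\<close>] assms(4) by (auto simp: lits_asg_def)
qed

lemma conj_minus_agree_iff_flip_lits_asg: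
  assumes full: "finite C1" "B \<in> dotPow C1" "card B = card C1"
    and "C1 \<inter> C2 = {}" "x \<in> asg (C1 \<union> C2)" "c2 \<in> asg C2" "L \<in> B"
  shows "conj (B - {L}) x \<and> \<not> litval L x \<and> (\<forall>v\<in>C2. x v = c2 v)
           \<longleftrightarrow> x = flip_lit L (lits_asg C1 B c2)"
proof -
  have L_C1: "lit_var L \<in> C1" using lit_var_mem_dotPow assms(2,7) .
  then have "(\<forall>v\<in>C2. flip_lit L x v = c2 v) \<longleftrightarrow> (\<forall>v\<in>C2. x v = c2 v)"
    using assms(4) by (metis disjoint_iff flip_lit_apply_other)
  moreover have "flip_lit L x \<in> asg (C1 \<union> C2)" using L_C1 assms(5) by (intro flip_lit_asg) auto
  ultimately have "conj B (flip_lit L x) \<and> (\<forall>v\<in>C2. x v = c2 v)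
                     \<longleftrightarrow> flip_lit L x = lits_asg C1 B c2"
    using conj_agree_iff_lits_asg[OF full assms(4) _ assms(6), of "flip_lit L x"] by simp
  then show ?thesis
    using conj_flip_lit_iff[OF inj_on_lit_var_dotPow[OF assms(2)] assms(7)]
    by (simp add: flip_lit_eq_iff)
qed

lemma suff_cause_rep_flip:
  assumes rep: "suff_cause_rep M C Dpo p A Bs" and not_sub: "\<not> (\<exists>i<p. B \<subseteq> Bs i)"
    and "\<omega> \<in> space M" "c \<in> asg C" "conj B c" "\<forall>L\<in>B. flip_lit L c \<in> asg C"
    and "Dpo c \<omega>"
  shows "\<exists>L\<in>B. Dpo (flip_lit L c) \<omega>"
proof -
  have D_iff: "\<And>x. x \<in> asg C \<Longrightarrow> Dpo x \<omega> \<longleftrightarrow> (\<exists>j<p. A j \<omega> \<and> conj (Bs j) x)"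
    using rep \<open>\<omega> \<in> space M\<close> by (auto simp: suff_cause_rep_def)
  obtain j where j: "j < p" "A j \<omega>" "conj (Bs j) c" using D_iff assms(4,7) by blast
  with not_sub obtain L where "L \<in> B" "L \<notin> Bs j" by blast
  with j \<open>conj B c\<close> have "conj (Bs j) (flip_lit L c)"
    by (intro conj_flip_lit) (auto simp: conj_def)
  with j \<open>L \<in> B\<close> assms(6) show ?thesis using D_iff by blast
qed

context prob_space
begin

lemma irreducible_if_dominates_flips:
  assumes "c \<in> asg C" "conj B c" "finite B" "\<forall>L\<in>B. flip_lit L c \<in> asg C"
    and Dpo_meas: "\<forall>x\<in>asg C. Dpo x \<in> measurable M (count_space UNIV)"
    and W_meas: "{\<omega>\<in>space M. W \<omega> = w} \<in> sets M"
    and dominates: "(\<Sum>L\<in>B. prob {\<omega>\<in>space M. Dpo (flip_lit L c) \<omega> \<and> W \<omega> = w})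
                      < prob {\<omega>\<in>space M. Dpo c \<omega> \<and> W \<omega> = w}"
  shows "irreducible M C Dpo B"
  unfolding irreducible_def
proof (intro allI impI, rule ccontr)
  fix p A Bs
  assume rep: "suff_cause_rep M C Dpo p A Bs" and not_sub: "\<not> (\<exists>i<p. B \<subseteq> Bs i)"
  let ?E = "\<lambda>x. {\<omega>\<in>space M. Dpo x \<omega> \<and> W \<omega> = w}"
  have E_sets: "?E x \<in> sets M" if "x \<in> asg C" for x
  proof -
    have "?E x = {\<omega>\<in>space M. Dpo x \<omega>} \<inter> {\<omega>\<in>space M. W \<omega> = w}" by auto
    then show ?thesis
      using Dpo_meas that W_meas by (auto intro: measurable_count_space_eq2 simp: pred_def[symmetric])
  qed
  have "?E c \<subseteq> (\<Union>L\<in>B. ?E (flip_lit L c))"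
    using suff_cause_rep_flip[OF rep not_sub _ assms(1,2,4)] by blast
  then have "prob (?E c) \<le> prob (\<Union>L\<in>B. ?E (flip_lit L c))"
    using E_sets assms(3,4) by (intro finite_measure_mono sets.finite_UN) auto
  also have "\<dots> \<le> (\<Sum>L\<in>B. prob (?E (flip_lit L c)))"
    using E_sets assms(3,4) by (intro finite_measure_subadditive_finite) auto
  finally show False using dominates by simp
qed

lemma condE_adjustment:
  assumes consistency: "\<forall>\<omega>\<in>space M. D \<omega> = Dpo (Cobs \<omega>) \<omega>"
    and nocf: "no_confounding M C Cobs Dpo W"
    and W_meas: "{\<omega>\<in>space M. W \<omega> = w} \<in> sets M"
    and "x \<in> asg C" and E: "\<forall>\<omega>\<in>space M. E \<omega> \<longleftrightarrow> Cobs \<omega> = x \<and> W \<omega> = w"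
    and pos: "prob {\<omega>\<in>space M. E \<omega>} > 0"
  shows "condE M D E = prob {\<omega>\<in>space M. Dpo x \<omega> \<and> W \<omega> = w} / prob {\<omega>\<in>space M. W \<omega> = w}"
proof -
  have D_E: "{\<omega>\<in>space M. D \<omega> \<and> E \<omega>} = {\<omega>\<in>space M. Dpo x \<omega> \<and> Cobs \<omega> = x \<and> W \<omega> = w}"
    and E_eq: "{\<omega>\<in>space M. E \<omega>} = {\<omega>\<in>space M. Cobs \<omega> = x \<and> W \<omega> = w}"
    using E consistency by auto
  have "prob {\<omega>\<in>space M. E \<omega>} \<le> prob {\<omega>\<in>space M. W \<omega> = w}"
    using E_eq W_meas by (intro finite_measure_mono) auto
  then have "prob {\<omega>\<in>space M. W \<omega> = w} > 0" using pos by simp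
  moreover have "prob {\<omega>\<in>space M. Dpo x \<omega> \<and> Cobs \<omega> = x \<and> W \<omega> = w} * prob {\<omega>\<in>space M. W \<omega> = w}
      = prob {\<omega>\<in>space M. Dpo x \<omega> \<and> W \<omega> = w} * prob {\<omega>\<in>space M. E \<omega>}"
    using nocf \<open>x \<in> asg C\<close> E_eq unfolding no_confounding_def by auto
  ultimately show ?thesis
    using pos unfolding condE_def D_E by (simp add: field_simps)
qed

end

theorem mainTheorem6:
  fixes M :: "'a measure"
    and C C1 C2 :: "'v set"
    and Cobs :: "'a \<Rightarrow> 'v \<Rightarrow> bool"
    and D :: "'a \<Rightarrow> bool"
    and Dpo :: "('v \<Rightarrow> bool) \<Rightarrow> 'a \<Rightarrow> bool"
    and W :: "'a \<Rightarrow> 'w"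
    and B :: "'v lit set"
    and c2 :: "'v \<Rightarrow> bool"
    and w :: 'w
  assumes prob: "prob_space M"
    and finC: "finite C"
    and partC: "C = C1 \<union> C2" "C1 \<inter> C2 = {}"
    and Cobs_asg: "\<forall>\<omega>\<in>space M. Cobs \<omega> \<in> asg C"
    and Cobs_meas: "\<forall>v\<in>C. (\<lambda>\<omega>. Cobs \<omega> v) \<in> measurable M (count_space UNIV)"
    and D_meas: "D \<in> measurable M (count_space UNIV)"
    and Dpo_meas: "\<forall>c\<in>asg C. Dpo c \<in> measurable M (count_space UNIV)"
    and W_meas: "\<forall>w'. {\<omega>\<in>space M. W \<omega> = w'} \<in> sets M"
    and consistency: "\<forall>\<omega>\<in>space M. D \<omega> = Dpo (Cobs \<omega>) \<omega>"
    and B_dot: "B \<in> dotPow C1"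
    and B_card: "card B = card C1"
    and nocf: "no_confounding M C Cobs Dpo W"
    and c2_asg: "c2 \<in> asg C2"
    and pos1: "measure M {\<omega>\<in>space M. (\<forall>L'\<in>B. litval L' (Cobs \<omega>))
                 \<and> (\<forall>v\<in>C2. Cobs \<omega> v = c2 v) \<and> W \<omega> = w} > 0"
    and pos2: "\<forall>L\<in>B. measure M {\<omega>\<in>space M. (\<forall>L'\<in>B - {L}. litval L' (Cobs \<omega>))
                 \<and> \<not> litval L (Cobs \<omega>) \<and> (\<forall>v\<in>C2. Cobs \<omega> v = c2 v) \<and> W \<omega> = w} > 0"
    and ineq: "condE M D (\<lambda>\<omega>. (\<forall>L'\<in>B. litval L' (Cobs \<omega>))
                 \<and> (\<forall>v\<in>C2. Cobs \<omega> v = c2 v) \<and> W \<omega> = w)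
               - (\<Sum>L\<in>B. condE M D (\<lambda>\<omega>. (\<forall>L'\<in>B - {L}. litval L' (Cobs \<omega>))
                 \<and> \<not> litval L (Cobs \<omega>) \<and> (\<forall>v\<in>C2. Cobs \<omega> v = c2 v) \<and> W \<omega> = w)) > 0"
  shows "irreducible M C Dpo B"
proof -
  interpret prob_space M by (rule prob)
  define c where "c = lits_asg C1 B c2"
  let ?PD = "\<lambda>x. prob {\<omega>\<in>space M. Dpo x \<omega> \<and> W \<omega> = w}"
  let ?PW = "prob {\<omega>\<in>space M. W \<omega> = w}"
  have finC1: "finite C1" using finC partC by simp
  have finB: "finite B" using finite_imageD lit_var_image_dotPow[OF finC1 B_dot B_card]
      inj_on_lit_var_dotPow[OF B_dot] finC1 by metis
  have c_asg: "c \<in> asg C" using lits_asg_asg[OF c2_asg] partC by (simp add: c_def)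
  have flip_asg: "\<forall>L\<in>B. flip_lit L c \<in> asg C"
    using c_asg partC lit_var_mem_dotPow[OF B_dot] flip_lit_asg by blast
  have Cobs_asg': "Cobs \<omega> \<in> asg (C1 \<union> C2)" if "\<omega> \<in> space M" for \<omega>
    using Cobs_asg that partC(1) by simp
  have "condE M D (\<lambda>\<omega>. (\<forall>L'\<in>B. litval L' (Cobs \<omega>)) \<and> (\<forall>v\<in>C2. Cobs \<omega> v = c2 v) \<and> W \<omega> = w)
          = ?PD c / ?PW"
  proof (rule condE_adjustment[OF consistency nocf W_meas[rule_format] c_asg _ pos1], intro ballI)
    fix \<omega> assume "\<omega> \<in> space M"
    from conj_agree_iff_lits_asg[OF finC1 B_dot B_card partC(2) Cobs_asg'[OF this] c2_asg]
    show "((\<forall>L'\<in>B. litval L' (Cobs \<omega>)) \<and> (\<forall>v\<in>C2. Cobs \<omega> v = c2 v) \<and> W \<omega> = w)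
            \<longleftrightarrow> Cobs \<omega> = c \<and> W \<omega> = w"
      unfolding conj_def c_def by blast
  qed
  moreover have "condE M D (\<lambda>\<omega>. (\<forall>L'\<in>B - {L}. litval L' (Cobs \<omega>)) \<and> \<not> litval L (Cobs \<omega>)
                   \<and> (\<forall>v\<in>C2. Cobs \<omega> v = c2 v) \<and> W \<omega> = w) = ?PD (flip_lit L c) / ?PW"
    if L: "L \<in> B" for L
  proof (rule condE_adjustment[OF consistency nocf W_meas[rule_format] flip_asg[rule_format, OF L] _
        pos2[rule_format, OF L]], intro ballI)
    fix \<omega> assume "\<omega> \<in> space M"
    from conj_minus_agree_iff_flip_lits_asg[OF finC1 B_dot B_card partC(2) Cobs_asg'[OF this] c2_asg L]
    show "((\<forall>L'\<in>B - {L}. litval L' (Cobs \<omega>)) \<and> \<not> litval L (Cobs \<omega>)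
             \<and> (\<forall>v\<in>C2. Cobs \<omega> v = c2 v) \<and> W \<omega> = w) \<longleftrightarrow> Cobs \<omega> = flip_lit L c \<and> W \<omega> = w"
      unfolding conj_def c_def by blast
  qed
  ultimately have "(\<Sum>L\<in>B. ?PD (flip_lit L c)) / ?PW < ?PD c / ?PW"
    using ineq by (simp add: sum_divide_distrib)
  then have "(\<Sum>L\<in>B. ?PD (flip_lit L c)) < ?PD c"
    using measure_nonneg[of M "{\<omega>\<in>space M. W \<omega> = w}"]
    by (cases "?PW = 0") (auto simp: divide_less_cancel)
  then show ?thesis
    using irreducible_if_dominates_flips[OF c_asg _ finB flip_asg Dpo_meas W_meas[rule_format]]
      conj_lits_asg[OF B_dot] by (simp add: c_def)
qed

end
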